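(* Let $R$ be a commutative ring with identity and $M$ a non-zero comultiplication $R$-module with $G'(M)$ non-null and $|\mathrm{Min}(M)|<\infty$. Then (i) no vertex of $G'(M)$ is adjacent to every other vertex; (ii) $G'(M)$ is not a complete graph.
   Context: An $R$-module $M$ is a comultiplication module if for every submodule $N$ of $M$ there is an ideal $I$ of $R$ with $N=\mathrm{Ann}_M(I)$. A submodule $N$ of $M$ is large if $N\cap L\neq 0$ for every non-zero submodule $L$ of $M$. $\mathrm{Min}(M)$ is the set of minimal submodules of $M$. The large sum graph $G'(M)$ has as vertex set the set of all non-zero non-large submodules of $M$, and two distinct vertices $N,K$ are adjacent iff $N+K$ is non-large in $M$. *)

theory Defs
  imports Main "HOL.Modules"
begin

text \<open>The R-module M is the whole carrier type 'b, with scalar multiplication scale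
  satisfying the module axioms (locale module). Submodules: the subspace condition of that locale, written out.\<close>

definition submod :: "('a::comm_ring_1 \<Rightarrow> 'b::ab_group_add \<Rightarrow> 'b) \<Rightarrow> 'b set \<Rightarrow> bool" where
  "submod scale N \<longleftrightarrow> 0 \<in> N \<and> (\<forall>x\<in>N. \<forall>y\<in>N. x + y \<in> N) \<and> (\<forall>c. \<forall>x\<in>N. scale c x \<in> N)"

definition ring_ideal :: "'a::comm_ring_1 set \<Rightarrow> bool" where
  "ring_ideal I \<longleftrightarrow> 0 \<in> I \<and> (\<forall>x\<in>I. \<forall>y\<in>I. x + y \<in> I) \<and> (\<forall>c. \<forall>x\<in>I. c * x \<in> I)"

definition annM :: "('a::comm_ring_1 \<Rightarrow> 'b::ab_group_add \<Rightarrow> 'b) \<Rightarrow> 'a set \<Rightarrow> 'b set" where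
  "annM scale I = {m. \<forall>r\<in>I. scale r m = 0}"

definition comultiplication_module :: "('a::comm_ring_1 \<Rightarrow> 'b::ab_group_add \<Rightarrow> 'b) \<Rightarrow> bool" where
  "comultiplication_module scale \<longleftrightarrow>
     (\<forall>N. submod scale N \<longrightarrow> (\<exists>I. ring_ideal I \<and> N = annM scale I))"

definition large_submod :: "('a::comm_ring_1 \<Rightarrow> 'b::ab_group_add \<Rightarrow> 'b) \<Rightarrow> 'b set \<Rightarrow> bool" where
  "large_submod scale N \<longleftrightarrow> submod scale N \<and>
     (\<forall>L. submod scale L \<and> L \<noteq> {0} \<longrightarrow> N \<inter> L \<noteq> {0})"

definition min_submods :: "('a::comm_ring_1 \<Rightarrow> 'b::ab_group_add \<Rightarrow> 'b) \<Rightarrow> 'b set set" where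
  "min_submods scale = {N. submod scale N \<and> N \<noteq> {0} \<and>
     (\<forall>L. submod scale L \<and> L \<subseteq> N \<and> L \<noteq> {0} \<longrightarrow> L = N)}"

definition set_sum :: "'b::ab_group_add set \<Rightarrow> 'b set \<Rightarrow> 'b set" where
  "set_sum N K = {x + y | x y. x \<in> N \<and> y \<in> K}"

definition lsg_vertices :: "('a::comm_ring_1 \<Rightarrow> 'b::ab_group_add \<Rightarrow> 'b) \<Rightarrow> 'b set set" where
  "lsg_vertices scale = {N. submod scale N \<and> N \<noteq> {0} \<and> \<not> large_submod scale N}"

definition lsg_adj :: "('a::comm_ring_1 \<Rightarrow> 'b::ab_group_add \<Rightarrow> 'b) \<Rightarrow> 'b set \<Rightarrow> 'b set \<Rightarrow> bool" where
  "lsg_adj scale N K \<longleftrightarrow> N \<in> lsg_vertices scale \<and> K \<in> lsg_vertices scale \<and> N \<noteq> K \<and>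
     \<not> large_submod scale (set_sum N K)"

text \<open>A graph is null iff it has no edges.\<close>
definition lsg_nonnull :: "('a::comm_ring_1 \<Rightarrow> 'b::ab_group_add \<Rightarrow> 'b) \<Rightarrow> bool" where
  "lsg_nonnull scale \<longleftrightarrow> (\<exists>N K. lsg_adj scale N K)"

definition lsg_complete :: "('a::comm_ring_1 \<Rightarrow> 'b::ab_group_add \<Rightarrow> 'b) \<Rightarrow> bool" where
  "lsg_complete scale \<longleftrightarrow> (\<forall>N\<in>lsg_vertices scale. \<forall>K\<in>lsg_vertices scale. N \<noteq> K \<longrightarrow> lsg_adj scale N K)"

end

theory Submission
  imports Defs
begin

text \<open>In a comultiplication module every non-zero submodule N contains a minimal one: for
  0 \<noteq> x \<in> N, Zorn gives a submodule P of Rx maximal among those avoiding x, so the colon ideal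
  m = (P : x) is maximal, and writing P = Ann(I) one finds 0 \<noteq> y \<in> Rx with m y = 0; then Ry is
  simple. Likewise distinct minimal submodules are separated by annihilating scalars. Given a
  vertex N, pick a minimal T \<subseteq> N and a scalar a (a product of separating scalars) that kills every
  other minimal submodule but not T. Its kernel K is a vertex: it meets T trivially and contains
  the minimal submodule of a complement of N. But N + K contains every minimal submodule, hence
  is large, so N and K are not adjacent.\<close>

context module
begin

lemma submod_iff_subspace: "submod scale N \<longleftrightarrow> subspace N"
  unfolding submod_def subspace_def ..

lemma min_submods_iff:
  "U \<in> min_submods scale \<longleftrightarrow>
     subspace U \<and> U \<noteq> {0} \<and> (\<forall>L. subspace L \<and> L \<subseteq> U \<and> L \<noteq> {0} \<longrightarrow> L = U)"
  by (simp add: min_submods_def submod_iff_subspace)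

lemma large_submod_iff:
  "large_submod scale N \<longleftrightarrow> subspace N \<and> (\<forall>L. subspace L \<and> L \<noteq> {0} \<longrightarrow> N \<inter> L \<noteq> {0})"
  by (simp add: large_submod_def submod_iff_subspace)

lemma lsg_vertices_iff:
  "N \<in> lsg_vertices scale \<longleftrightarrow> subspace N \<and> N \<noteq> {0} \<and> \<not> large_submod scale N"
  by (simp add: lsg_vertices_def submod_iff_subspace)

lemma comultiplication_moduleD:
  "comultiplication_module scale \<Longrightarrow> subspace N \<Longrightarrow> \<exists>I. N = annM scale I"
  unfolding comultiplication_module_def submod_iff_subspace by blast

lemma subspace_neq_zero_iff: "subspace X \<Longrightarrow> X \<noteq> {0} \<longleftrightarrow> (\<exists>x\<in>X. x \<noteq> 0)"
  using subspace_0 by blast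

lemma set_sum_eq_span:
  assumes "subspace N" "subspace K"
  shows "set_sum N K = span (N \<union> K)"
proof -
  have spans: "span N = N" "span K = K" using assms by simp_all
  show ?thesis by (simp add: set_sum_def span_Un spans)
qed

lemma subspace_Union_chain:
  assumes "C \<noteq> {}" "\<forall>S\<in>C. subspace S" "\<forall>X\<in>C. \<forall>Y\<in>C. X \<subseteq> Y \<or> Y \<subseteq> X"
  shows "subspace (\<Union>C)"
proof (rule subspaceI)
  show "0 \<in> \<Union>C" using assms(1,2) subspace_0 by blast
next
  fix x y assume "x \<in> \<Union>C" "y \<in> \<Union>C"
  then obtain X Y where "X \<in> C" "Y \<in> C" "x \<in> X" "y \<in> Y" by blast
  with assms(2,3) show "x + y \<in> \<Union>C"
    by (metis UnionI subsetD subspace_add)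
next
  fix c x assume "x \<in> \<Union>C"
  with assms(2) show "c *s x \<in> \<Union>C" using subspace_scale by blast
qed

lemma minimal_submod_Int_cases:
  assumes U: "U \<in> min_submods scale" and L: "subspace L"
  shows "U \<subseteq> L \<or> U \<inter> L = {0}"
  using U L subspace_inter[of U L] unfolding min_submods_iff by blast

lemma min_submods_nonzero_elem: "U \<in> min_submods scale \<Longrightarrow> \<exists>u\<in>U. u \<noteq> 0"
  unfolding min_submods_iff using subspace_neq_zero_iff by blast

lemma minimal_submod_scale_image:
  assumes U: "U \<in> min_submods scale" and "u \<in> U" "a *s u \<noteq> 0"
  shows "(\<lambda>v. a *s v) ` U = U"
proof -
  have "subspace U" using U by (simp add: min_submods_iff)
  then have "subspace ((\<lambda>v. a *s v) ` U)" and "(\<lambda>v. a *s v) ` U \<subseteq> U"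
    using module_hom.subspace_image[OF module_hom_scale_self] subspace_scale by auto
  moreover have "(\<lambda>v. a *s v) ` U \<noteq> {0}" using assms(2,3) by blast
  ultimately show ?thesis using U by (simp add: min_submods_iff)
qed

text \<open>The annihilator of a simple module is a prime ideal.\<close>
lemma minimal_submod_prod_not_annihilates:
  assumes U: "U \<in> min_submods scale" and "finite F"
    and "\<forall>f\<in>F. \<exists>u\<in>U. c f *s u \<noteq> 0"
  shows "\<exists>u\<in>U. prod c F *s u \<noteq> 0"
  using assms(2,3)
proof (induction F rule: finite_induct)
  case empty
  then show ?case using min_submods_nonzero_elem[OF U] by simp
next
  case (insert f F)
  then obtain u where u: "u \<in> U" "prod c F *s u \<noteq> 0" by auto
  have "(\<lambda>v. c f *s v) ` U = U"
    using insert.prems minimal_submod_scale_image[OF U] by blast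
  with u obtain v where "v \<in> U" "u = c f *s v" by blast
  then have "prod c (insert f F) *s v = prod c F *s u"
    using insert.hyps by (simp add: mult.commute)
  then show ?case using u \<open>v \<in> U\<close> by metis
qed

lemma comultiplication_separates_minimal_submods:
  assumes comul: "comultiplication_module scale"
    and T: "T \<in> min_submods scale" and T': "T' \<in> min_submods scale" and "T \<noteq> T'"
  shows "\<exists>a. (\<forall>t\<in>T'. a *s t = 0) \<and> (\<exists>t\<in>T. a *s t \<noteq> 0)"
proof (rule ccontr)
  assume H: "\<not> ?thesis"
  have "subspace T'" using T' by (simp add: min_submods_iff)
  then obtain I where I: "T' = annM scale I" using comultiplication_moduleD[OF comul] by blast
  have "T \<subseteq> annM scale I"
  proof (unfold annM_def, intro subsetI CollectI ballI)
    fix v r assume "v \<in> T" "r \<in> I"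
    have "\<forall>t\<in>T'. r *s t = 0" using \<open>r \<in> I\<close> by (simp add: I annM_def)
    then show "r *s v = 0" using H \<open>v \<in> T\<close> by blast
  qed
  then have "T = T'" using T T' I unfolding min_submods_iff by blast
  with \<open>T \<noteq> T'\<close> show False ..
qed

lemma comultiplication_annihilator_of_other_minimals:
  assumes comul: "comultiplication_module scale"
    and fin: "finite (min_submods scale)" and T: "T \<in> min_submods scale"
  shows "\<exists>a. (\<forall>U\<in>min_submods scale. U \<noteq> T \<longrightarrow> (\<forall>u\<in>U. a *s u = 0)) \<and> (\<exists>t\<in>T. a *s t \<noteq> 0)"
proof -
  define Ms where "Ms = min_submods scale - {T}"
  obtain c where c: "\<forall>U\<in>Ms. (\<forall>u\<in>U. c U *s u = 0) \<and> (\<exists>t\<in>T. c U *s t \<noteq> 0)"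
    using bchoice[of Ms] comultiplication_separates_minimal_submods[OF comul T]
    unfolding Ms_def by (metis Diff_iff insertI1)
  have "finite Ms" using fin by (simp add: Ms_def)
  have "prod c Ms *s u = 0" if "U \<in> Ms" "u \<in> U" for U u
  proof -
    have "prod c Ms = prod c (Ms - {U}) * c U"
      using prod.remove[OF \<open>finite Ms\<close> \<open>U \<in> Ms\<close>] by (simp add: mult.commute)
    then show ?thesis using c that by (metis scale_scale scale_zero_right)
  qed
  moreover have "\<exists>t\<in>T. prod c Ms *s t \<noteq> 0"
    using minimal_submod_prod_not_annihilates[OF T \<open>finite Ms\<close>] c by blast
  ultimately show ?thesis unfolding Ms_def by blast
qed

lemma exists_maximal_subspace_avoiding:
  assumes "x \<noteq> 0"
  shows "\<exists>P. subspace P \<and> P \<subseteq> span {x} \<and> x \<notin> P \<and>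
           (\<forall>Q. subspace Q \<and> P \<subseteq> Q \<and> Q \<subseteq> span {x} \<and> x \<notin> Q \<longrightarrow> Q = P)"
proof -
  define F where "F = {P. subspace P \<and> P \<subseteq> span {x} \<and> x \<notin> P}"
  have "\<exists>P\<in>F. \<forall>Q\<in>F. P \<subseteq> Q \<longrightarrow> Q = P"
  proof (rule subset_Zorn_nonempty)
    have "{0} \<in> F" using assms by (simp add: F_def span_zero)
    then show "F \<noteq> {}" by blast
  next
    fix C assume C: "C \<noteq> {}" "subset.chain F C"
    then have "C \<subseteq> F" "\<forall>X\<in>C. \<forall>Y\<in>C. X \<subseteq> Y \<or> Y \<subseteq> X"
      by (simp_all add: subset_chain_def)
    then have "subspace (\<Union>C)" using subspace_Union_chain[OF C(1)] by (auto simp: F_def)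
    moreover have "\<Union>C \<subseteq> span {x}" "x \<notin> \<Union>C" using \<open>C \<subseteq> F\<close> by (auto simp: F_def)
    ultimately show "\<Union>C \<in> F" by (simp add: F_def)
  qed
  then obtain P where "P \<in> F" "\<forall>Q\<in>F. P \<subseteq> Q \<longrightarrow> Q = P" by blast
  then show ?thesis unfolding F_def mem_Collect_eq by (intro exI[of _ P]) blast
qed

lemma maximal_subspace_avoiding_inverse:
  assumes P: "subspace P" "P \<subseteq> span {x}" "x \<notin> P"
    and Pmax: "\<forall>Q. subspace Q \<and> P \<subseteq> Q \<and> Q \<subseteq> span {x} \<and> x \<notin> Q \<longrightarrow> Q = P"
    and t: "t *s x \<notin> P"
  shows "\<exists>u. (1 - u * t) *s x \<in> P"
proof -
  define Q where "Q = span (insert (t *s x) P)"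
  have "subspace Q" "P \<subseteq> Q" "t *s x \<in> Q" by (auto simp: Q_def intro: span_base)
  moreover have "Q \<subseteq> span {x}"
    unfolding Q_def using P(2) by (intro span_minimal) (auto intro: span_scale span_base)
  ultimately have "x \<in> Q" using Pmax t by blast
  then obtain u where "x - u *s t *s x \<in> span P"
    unfolding Q_def span_breakdown_eq by blast
  moreover have "span P = P" using P(1) by simp
  ultimately have "(1 - u * t) *s x \<in> P" by (simp add: algebra_simps)
  then show ?thesis ..
qed

lemma comultiplication_nonzero_multiple_annihilated:
  assumes comul: "comultiplication_module scale" and P: "subspace P" and "x \<notin> P"
  shows "\<exists>y\<in>span {x}. y \<noteq> 0 \<and> (\<forall>s. s *s x \<in> P \<longrightarrow> s *s y = 0)"
proof (rule ccontr)
  assume H: "\<not> ?thesis"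
  obtain I where I: "P = annM scale I" using comultiplication_moduleD[OF comul P] by blast
  have "r *s x = 0" if "r \<in> I" for r
  proof -
    have "s *s r *s x = 0" if "s *s x \<in> P" for s
      using that \<open>r \<in> I\<close> by (simp add: I annM_def mult.commute)
    moreover have "r *s x \<in> span {x}" by (simp add: span_singleton)
    ultimately show ?thesis using H by blast
  qed
  then have "x \<in> P" by (simp add: I annM_def)
  with \<open>x \<notin> P\<close> show False ..
qed

lemma span_singleton_minimal:
  assumes "y \<noteq> 0" and inv: "\<forall>t. t *s y \<noteq> 0 \<longrightarrow> (\<exists>u. u *s t *s y = y)"
  shows "span {y} \<in> min_submods scale"
  unfolding min_submods_iff
proof (intro conjI allI impI)
  show "span {y} \<noteq> {0}" using assms(1) span_base by blast
next
  fix L assume L: "subspace L \<and> L \<subseteq> span {y} \<and> L \<noteq> {0}"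
  then obtain t where "t *s y \<in> L" "t *s y \<noteq> 0"
    using subspace_neq_zero_iff by (auto simp: span_singleton)
  then have "y \<in> L" using inv L subspace_scale by metis
  then show "L = span {y}" using L span_minimal by blast
qed simp

lemma comultiplication_exists_minimal_submod:
  assumes comul: "comultiplication_module scale" and "subspace N" "N \<noteq> {0}"
  shows "\<exists>U\<in>min_submods scale. U \<subseteq> N"
proof -
  obtain x where "x \<in> N" "x \<noteq> 0" using assms(2,3) subspace_neq_zero_iff by blast
  then obtain P where P: "subspace P" "P \<subseteq> span {x}" "x \<notin> P"
    and Pmax: "\<forall>Q. subspace Q \<and> P \<subseteq> Q \<and> Q \<subseteq> span {x} \<and> x \<notin> Q \<longrightarrow> Q = P"
    using exists_maximal_subspace_avoiding by blast
  obtain y where y: "y \<in> span {x}" "y \<noteq> 0" and ann: "\<forall>s. s *s x \<in> P \<longrightarrow> s *s y = 0"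
    using comultiplication_nonzero_multiple_annihilated[OF comul P(1,3)] by blast
  have "\<exists>u. u *s t *s y = y" if "t *s y \<noteq> 0" for t
  proof -
    have "t *s x \<notin> P" using that ann by blast
    then obtain u where "(1 - u * t) *s x \<in> P"
      using maximal_subspace_avoiding_inverse[OF P Pmax] by blast
    then have "(1 - u * t) *s y = 0" using ann by blast
    then have "u *s t *s y = y" by (simp add: algebra_simps)
    then show ?thesis ..
  qed
  then have "span {y} \<in> min_submods scale" using span_singleton_minimal y(2) by blast
  moreover have "span {y} \<subseteq> N"
  proof -
    have "span {x} \<subseteq> N" using \<open>x \<in> N\<close> assms(2) by (intro span_minimal) auto
    then show ?thesis using y(1) assms(2) by (intro span_minimal) auto
  qed
  ultimately show ?thesis by blast
qed

lemma comultiplication_large_if_contains_minimals: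
  assumes comul: "comultiplication_module scale" and "subspace X"
    and "\<forall>U\<in>min_submods scale. U \<subseteq> X"
  shows "large_submod scale X"
  unfolding large_submod_iff
proof (intro conjI allI impI)
  fix L assume L: "subspace L \<and> L \<noteq> {0}"
  then obtain U where "U \<in> min_submods scale" "U \<subseteq> L"
    using comultiplication_exists_minimal_submod[OF comul] by blast
  with assms(3) min_submods_nonzero_elem show "X \<inter> L \<noteq> {0}" by blast
qed fact

lemma lsg_vertex_has_non_neighbour:
  assumes comul: "comultiplication_module scale" and fin: "finite (min_submods scale)"
    and N: "N \<in> lsg_vertices scale"
  shows "\<exists>K\<in>lsg_vertices scale. K \<noteq> N \<and> \<not> lsg_adj scale N K"
proof -
  have "subspace N" "N \<noteq> {0}" "\<not> large_submod scale N"
    using N by (auto simp: lsg_vertices_iff)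
  then obtain L where L: "subspace L" "L \<noteq> {0}" "N \<inter> L = {0}"
    by (auto simp: large_submod_iff)
  obtain S where S: "S \<in> min_submods scale" "S \<subseteq> L"
    using comultiplication_exists_minimal_submod[OF comul L(1,2)] by blast
  obtain T where T: "T \<in> min_submods scale" "T \<subseteq> N"
    using comultiplication_exists_minimal_submod[OF comul \<open>subspace N\<close> \<open>N \<noteq> {0}\<close>] by blast
  have "S \<noteq> T" using S(2) T(2) L(3) min_submods_nonzero_elem[OF T(1)] by blast
  obtain a t where a_others: "\<forall>U\<in>min_submods scale. U \<noteq> T \<longrightarrow> (\<forall>u\<in>U. a *s u = 0)"
    and t: "t \<in> T" "a *s t \<noteq> 0"
    using comultiplication_annihilator_of_other_minimals[OF comul fin T(1)] by blast
  define K where "K = {v. a *s v = 0}"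
  have K: "subspace K"
    unfolding K_def by (rule module_hom.subspace_kernel[OF module_hom_scale_self])
  have others_K: "U \<subseteq> K" if "U \<in> min_submods scale" "U \<noteq> T" for U
    using a_others that by (auto simp: K_def)
  have "K \<noteq> {0}" using others_K[OF S(1) \<open>S \<noteq> T\<close>] min_submods_nonzero_elem[OF S(1)] by blast
  moreover have "\<not> large_submod scale K"
  proof -
    have "T \<inter> K = {0}" using minimal_submod_Int_cases[OF T(1) K] t by (auto simp: K_def)
    then show ?thesis using T(1) by (auto simp: large_submod_iff min_submods_iff)
  qed
  ultimately have "K \<in> lsg_vertices scale" using K by (simp add: lsg_vertices_iff)
  moreover have "K \<noteq> N" using t T(2) by (auto simp: K_def)
  moreover have "large_submod scale (set_sum N K)"
  proof (rule comultiplication_large_if_contains_minimals[OF comul])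
    show "subspace (set_sum N K)" using set_sum_eq_span[OF \<open>subspace N\<close> K] by simp
    have "N \<union> K \<subseteq> set_sum N K" using set_sum_eq_span[OF \<open>subspace N\<close> K] span_superset by simp
    then show "\<forall>U\<in>min_submods scale. U \<subseteq> set_sum N K" using T(2) others_K by blast
  qed
  ultimately show ?thesis unfolding lsg_adj_def by blast
qed

end

theorem proposition2p11:
  fixes scale :: "'a::comm_ring_1 \<Rightarrow> 'b::ab_group_add \<Rightarrow> 'b"
  assumes "module scale"
    and "\<exists>x::'b. x \<noteq> 0"
    and "comultiplication_module scale"
    and "lsg_nonnull scale"
    and "finite (min_submods scale)"
  shows "(\<not> (\<exists>N\<in>lsg_vertices scale. \<forall>K\<in>lsg_vertices scale. K \<noteq> N \<longrightarrow> lsg_adj scale N K))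
         \<and> \<not> lsg_complete scale"
proof -
  interpret module scale by fact
  have no_universal: "\<not> (\<exists>N\<in>lsg_vertices scale. \<forall>K\<in>lsg_vertices scale. K \<noteq> N \<longrightarrow> lsg_adj scale N K)"
    using lsg_vertex_has_non_neighbour[OF assms(3,5)] by blast
  obtain N where "N \<in> lsg_vertices scale"
    using assms(4) unfolding lsg_nonnull_def lsg_adj_def by blast
  have "\<not> lsg_complete scale"
  proof
    assume "lsg_complete scale"
    then have "\<forall>K\<in>lsg_vertices scale. K \<noteq> N \<longrightarrow> lsg_adj scale N K"
      using \<open>N \<in> lsg_vertices scale\<close> unfolding lsg_complete_def by (simp add: eq_commute)
    with no_universal \<open>N \<in> lsg_vertices scale\<close> show False by blast
  qed
  with no_universal show ?thesis by blast
qed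

end
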